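(* Let $V$ be a complex normed vector space, $x=\{x_n\}_{n=1}^\infty\in l^{\infty}(V)$ and $v\in V$. If $x$ is strongly almost convergent to $v$, then $x$ is weakly almost convergent to $v$.
   Context: $\mathbb{N}=\{1,2,3,\dots\}$. $l^{\infty}(V)$ is the space of bounded sequences $x=\{x_n\}_{n=1}^\infty$ in $V$ with norm $\|x\|_\infty=\sup_n\|x_n\|_V$. For $v\in V$, $\widetilde v=\{v,v,\dots\}$. $T$ is the left shift: $T\{x_1,x_2,\dots\}=\{x_2,x_3,\dots\}$. A Banach limit functional is a bounded linear functional $L$ on $l^\infty(V)$ with $\|L\|\le1$ and $L(Tx)=L(x)$ for all $x$. A sequence $x\in l^\infty(V)$ is strongly almost convergent to $v\in V$ if $L(x)=L(\widetilde v)$ for every Banach limit functional $L$. A bounded complex sequence $\{a_n\}$ is almost convergent to $a\in\mathbb{C}$ if $\sup_{j\in\mathbb{N}}\left|\frac1n\sum_{i=0}^{n-1}a_{i+j}-a\right|\to0$ as $n\to\infty$. $x\in l^\infty(V)$ is weakly almost convergent to $v$ if for every $f\in V^*$ the scalar sequence $\{f(x_n)\}_{n=1}^\infty$ is almost convergent to $f(v)$. *)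

theory Defs
  imports Complex_Main
begin

class complex_normed_vector = real_normed_vector +
  fixes scaleC :: "complex \<Rightarrow> 'a \<Rightarrow> 'a"
  assumes scaleC_add_right: "scaleC a (x + y) = scaleC a x + scaleC a y"
    and scaleC_add_left: "scaleC (a + b) x = scaleC a x + scaleC b x"
    and scaleC_scaleC: "scaleC a (scaleC b x) = scaleC (a * b) x"
    and scaleC_one: "scaleC 1 x = x"
    and scaleC_of_real: "scaleC (complex_of_real r) x = scaleR r x"
    and norm_scaleC: "norm (scaleC a x) = cmod a * norm x"

text \<open>Sup norm on l-infinity(V); sequences are indexed from 0 instead of 1.\<close>
definition linf_norm :: "(nat \<Rightarrow> 'a::real_normed_vector) \<Rightarrow> real" where
  "linf_norm x = (SUP n. norm (x n))"

definition banach_limit_functional ::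
    "((nat \<Rightarrow> 'a::complex_normed_vector) \<Rightarrow> complex) \<Rightarrow> bool" where
  "banach_limit_functional L \<longleftrightarrow>
     (\<forall>x y. Bseq x \<longrightarrow> Bseq y \<longrightarrow> L (\<lambda>n. x n + y n) = L x + L y) \<and>
     (\<forall>c x. Bseq x \<longrightarrow> L (\<lambda>n. scaleC c (x n)) = c * L x) \<and>
     (\<forall>x. Bseq x \<longrightarrow> cmod (L x) \<le> linf_norm x) \<and>
     (\<forall>x. Bseq x \<longrightarrow> L (\<lambda>n. x (Suc n)) = L x)"

definition strongly_almost_convergent ::
    "(nat \<Rightarrow> 'a::complex_normed_vector) \<Rightarrow> 'a \<Rightarrow> bool" where
  "strongly_almost_convergent x v \<longleftrightarrow> Bseq x \<and>
     (\<forall>L. banach_limit_functional L \<longrightarrow> L x = L (\<lambda>n. v))"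

definition almost_convergent :: "(nat \<Rightarrow> complex) \<Rightarrow> complex \<Rightarrow> bool" where
  "almost_convergent a l \<longleftrightarrow> Bseq a \<and>
     ((\<lambda>n. SUP j. cmod ((\<Sum>i<n. a (i + j)) / of_nat n - l)) \<longlonglongrightarrow> 0)"

definition complex_dual :: "('a::complex_normed_vector \<Rightarrow> complex) \<Rightarrow> bool" where
  "complex_dual f \<longleftrightarrow>
     (\<forall>x y. f (x + y) = f x + f y) \<and> (\<forall>c x. f (scaleC c x) = c * f x) \<and>
     (\<exists>K. \<forall>x. cmod (f x) \<le> K * norm x)"

definition weakly_almost_convergent ::
    "(nat \<Rightarrow> 'a::complex_normed_vector) \<Rightarrow> 'a \<Rightarrow> bool" where
  "weakly_almost_convergent x v \<longleftrightarrow> Bseq x \<and>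
     (\<forall>f. complex_dual f \<longrightarrow> almost_convergent (\<lambda>n. f (x n)) (f v))"

end

theory Submission
  imports Defs "HOL-Analysis.Analysis"
begin

text \<open>
  Let \<open>f\<close> be a bounded functional for which the averages
  of \<open>f (x n)\<close> over the windows \<open>[j, j + n)\<close> do not converge to \<open>f v\<close> uniformly in \<open>j\<close>.
  Then there are windows \<open>[J k, J k + N k)\<close> with \<open>N k \<rightarrow> \<infinity>\<close> on which these averages stay
  \<open>\<epsilon>\<close> away from \<open>f v\<close>. Rescale \<open>f\<close> to norm at most 1 and take, for every bounded sequence
  \<open>y\<close>, the limit of the window averages of \<open>f \<circ> y\<close> along an ultrafilter finer than
  \<open>sequentially\<close>. This is a Banach limit functional: linearity and the norm bound pass to
  the limit, and shift invariance holds because the averages of \<open>y\<close> and of its shift differ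
  by \<open>O(1 / N k)\<close>. It separates \<open>x\<close> from the constant sequence \<open>v\<close>, contradicting strong
  almost convergence.
\<close>

subsection \<open>Ultrafilters\<close>

text \<open>In Isabelle's filter order finer filters are smaller, so ultrafilters are the minimal
  proper filters.\<close>

definition ultrafilter :: "'a filter \<Rightarrow> bool" where
  "ultrafilter U \<longleftrightarrow> U \<noteq> bot \<and> (\<forall>G. G \<noteq> bot \<longrightarrow> G \<le> U \<longrightarrow> G = U)"

text \<open>Every proper filter is refined by an ultrafilter (Zorn's lemma; chains of proper
  filters have a proper infimum because chains are directed).\<close>
lemma ex_ultrafilter_le:
  fixes F :: "'a filter"
  assumes "F \<noteq> bot"
  shows "\<exists>U\<le>F. ultrafilter U"
proof -
  let ?A = "{G. G \<noteq> bot \<and> G \<le> F}"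
  have "\<exists>U\<in>?A. \<forall>G\<in>?A. G \<le> U \<longrightarrow> G = U"
  proof (rule predicate_Zorn)
    show "partial_order_on ?A (relation_of (\<lambda>G H. H \<le> G) ?A)"
      by (rule partial_order_on_relation_ofI) auto
    show "\<exists>U\<in>?A. \<forall>G\<in>C. U \<le> G" if C: "C \<in> Chains (relation_of (\<lambda>G H. H \<le> G) ?A)" for C
    proof (cases "C = {}")
      case True
      then show ?thesis using assms by auto
    next
      case False
      have C_sub: "C \<subseteq> ?A" and C_total: "\<And>G H. G \<in> C \<Longrightarrow> H \<in> C \<Longrightarrow> G \<le> H \<or> H \<le> G"
        using C by (auto simp: Chains_def relation_of_def)
      have directed: "\<exists>K\<in>C. K \<le> inf G H" if "G \<in> C" "H \<in> C" for G H
        using C_total[OF that] that by (metis inf.absorb_iff1 inf.absorb_iff2 order_refl)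
      have "eventually P (Inf C) \<longleftrightarrow> (\<exists>G\<in>C. eventually P G)" for P
        by (rule eventually_Inf_base[OF False directed])
      then have "Inf C \<noteq> bot"
        using C_sub by (auto simp flip: eventually_False)
      moreover obtain G where "G \<in> C"
        using False by blast
      then have "Inf C \<le> F"
        using C_sub by (auto intro: Inf_lower2)
      ultimately show ?thesis
        by (intro bexI[of _ "Inf C"]) (auto intro: Inf_lower)
    qed
  qed
  then obtain U where U: "U \<noteq> bot" "U \<le> F" and max: "\<And>G. G \<in> ?A \<Longrightarrow> G \<le> U \<Longrightarrow> G = U"
    by blast
  have "G = U" if "G \<noteq> bot" "G \<le> U" for G
    using max[of G] that U(2) by auto
  with U show ?thesis
    unfolding ultrafilter_def by blast
qed

text \<open>Along an ultrafilter, every function with values in a compact set converges: a cluster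
  point \<open>l\<close> of the image filter yields a proper refinement \<open>inf U (filtercomap s (nhds l))\<close>,
  which by minimality is \<open>U\<close> itself.\<close>
lemma ultrafilter_tendsto_compact:
  fixes s :: "'a \<Rightarrow> 'b::topological_space"
  assumes U: "ultrafilter U" and K: "compact K" and s_in_K: "\<And>x. s x \<in> K"
  shows "\<exists>l. (s \<longlongrightarrow> l) U"
proof -
  have "filtermap s U \<noteq> bot"
    using U by (simp add: ultrafilter_def filtermap_bot_iff)
  moreover have "eventually (\<lambda>y. y \<in> K) (filtermap s U)"
    using s_in_K by (simp add: eventually_filtermap)
  ultimately obtain l where l: "inf (nhds l) (filtermap s U) \<noteq> bot"
    using K unfolding compact_filter by blast
  have "inf U (filtercomap s (nhds l)) \<noteq> bot"
  proof
    assume "inf U (filtercomap s (nhds l)) = bot"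
    then obtain P Q where P: "eventually P U" and Q: "eventually Q (filtercomap s (nhds l))"
      and disjoint: "\<And>x. P x \<Longrightarrow> Q x \<Longrightarrow> False"
      unfolding trivial_limit_def eventually_inf by blast
    from Q obtain R where R: "eventually R (nhds l)" and RQ: "\<And>x. R (s x) \<Longrightarrow> Q x"
      by (auto simp: eventually_filtercomap)
    have "eventually (\<lambda>y. \<not> R y) (filtermap s U)"
      unfolding eventually_filtermap using P by eventually_elim (use disjoint RQ in blast)
    with R have "eventually (\<lambda>_. False) (inf (nhds l) (filtermap s U))"
      unfolding eventually_inf by blast
    with l show False
      unfolding eventually_False by blast
  qed
  then have "inf U (filtercomap s (nhds l)) = U"
    using U unfolding ultrafilter_def by auto
  then have "U \<le> filtercomap s (nhds l)"
    by (metis inf.absorb_iff1)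
  then have "(s \<longlongrightarrow> l) U"
    by (rule filterlim_mono[OF filterlim_filtercomap order_refl])
  then show ?thesis ..
qed

lemma ultrafilter_tendsto_Lim:
  fixes s :: "'a \<Rightarrow> 'b::heine_borel"
  assumes U: "ultrafilter U" and "bounded (range s)"
  shows "(s \<longlongrightarrow> Lim U s) U"
proof -
  have "compact (closure (range s))"
    using assms(2) by (simp add: bounded_closure compact_eq_bounded_closed)
  then obtain l where l: "(s \<longlongrightarrow> l) U"
    using ultrafilter_tendsto_compact[OF U _ closure_subset[THEN subsetD]] by blast
  moreover have "Lim U s = l"
    using U l by (intro tendsto_Lim) (auto simp: ultrafilter_def)
  ultimately show ?thesis by simp
qed

subsection \<open>Window averages\<close>

definition window_average :: "(nat \<Rightarrow> complex) \<Rightarrow> nat \<Rightarrow> nat \<Rightarrow> complex" where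
  "window_average a n j = (\<Sum>i<n. a (i + j)) / of_nat n"

lemma norm_window_average_le:
  assumes "\<And>i. norm (a i) \<le> C"
  shows "norm (window_average a n j) \<le> C"
proof (cases "n = 0")
  case True
  then show ?thesis
    using order_trans[OF norm_ge_zero assms] by (simp add: window_average_def)
next
  case False
  have "norm (\<Sum>i<n. a (i + j)) \<le> real n * C"
    using sum_norm_le[of "{..<n}" "\<lambda>i. a (i + j)" "\<lambda>_. C"] assms by simp
  then have "norm (\<Sum>i<n. a (i + j)) / real n \<le> real n * C / real n"
    by (rule divide_right_mono) simp
  with False show ?thesis
    by (simp add: window_average_def norm_divide)
qed

lemma window_average_add:
  "window_average (\<lambda>i. a i + b i) n j = window_average a n j + window_average b n j"
  by (simp add: window_average_def sum.distrib add_divide_distrib)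

lemma window_average_mult:
  "window_average (\<lambda>i. c * a i) n j = c * window_average a n j"
  by (simp add: window_average_def sum_distrib_left)

lemma window_average_const:
  "n > 0 \<Longrightarrow> window_average (\<lambda>_. c) n j = c"
  by (simp add: window_average_def)

lemma window_average_shift:
  "window_average (\<lambda>i. a (Suc i)) n j - window_average a n j = (a (n + j) - a j) / of_nat n"
proof -
  have "window_average (\<lambda>i. a (Suc i)) n j - window_average a n j
          = (\<Sum>i<n. a (Suc i + j) - a (i + j)) / of_nat n"
    by (simp add: window_average_def sum_subtractf diff_divide_distrib)
  also have "\<dots> = (a (n + j) - a j) / of_nat n"
    using sum_lessThan_telescope[of "\<lambda>i. a (i + j)" n] by simp
  finally show ?thesis .
qed

lemma window_average_shift_vanishes:
  assumes bound: "\<And>i. norm (a i) \<le> B" and N: "filterlim N at_top sequentially"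
  shows "(\<lambda>k. window_average (\<lambda>i. a (Suc i)) (N k) (J k) - window_average a (N k) (J k))
           \<longlonglongrightarrow> 0"
proof (rule Lim_null_comparison)
  have "(\<lambda>k. inverse (real (N k))) \<longlonglongrightarrow> 0"
    using filterlim_compose[OF filterlim_real_sequentially N] by (rule tendsto_inverse_0_at_top)
  then show "(\<lambda>k. 2 * B * inverse (real (N k))) \<longlonglongrightarrow> 0"
    by (rule tendsto_mult_right_zero)
  have "norm (a (n + j) - a j) \<le> 2 * B" for n j
    using norm_triangle_ineq4[of "a (n + j)" "a j"] bound[of "n + j"] bound[of j] by linarith
  then have "norm (a (N k + J k) - a (J k)) / real (N k) \<le> 2 * B / real (N k)" for k
    by (rule divide_right_mono) simp
  then have "norm (window_average (\<lambda>i. a (Suc i)) (N k) (J k) - window_average a (N k) (J k))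
               \<le> 2 * B * inverse (real (N k))" for k
    unfolding window_average_shift norm_divide norm_of_nat by (simp only: divide_inverse)
  then show "\<forall>\<^sub>F k in sequentially. norm (window_average (\<lambda>i. a (Suc i)) (N k) (J k)
              - window_average a (N k) (J k)) \<le> 2 * B * inverse (real (N k))"
    by (rule always_eventually[OF allI])
qed

subsection \<open>A Banach limit built from windows\<close>

lemma norm_le_linf_norm:
  fixes y :: "nat \<Rightarrow> 'a::real_normed_vector"
  assumes "Bseq y"
  shows "norm (y n) \<le> linf_norm y"
  unfolding linf_norm_def
proof (rule cSUP_upper)
  obtain K where "\<And>n. norm (y n) \<le> K"
    using assms by (meson BseqE)
  then show "bdd_above (range (\<lambda>n. norm (y n)))"
    by (rule bdd_aboveI2)
qed simp

definition window_limit ::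
    "nat filter \<Rightarrow> ('a \<Rightarrow> complex) \<Rightarrow> (nat \<Rightarrow> nat) \<Rightarrow> (nat \<Rightarrow> nat) \<Rightarrow> (nat \<Rightarrow> 'a) \<Rightarrow> complex"
  where "window_limit U g N J y = Lim U (\<lambda>k. window_average (\<lambda>i. g (y i)) (N k) (J k))"

text \<open>For a functional of norm at most 1 and a bounded sequence the window averages are bounded,
  so they converge along an ultrafilter, necessarily to the window limit.\<close>
lemma window_limit_tendsto:
  fixes y :: "nat \<Rightarrow> 'a::real_normed_vector"
  assumes U: "ultrafilter U" and g: "\<And>z. cmod (g z) \<le> norm z" and y: "Bseq y"
  shows "((\<lambda>k. window_average (\<lambda>i. g (y i)) (N k) (J k)) \<longlongrightarrow> window_limit U g N J y) U"
  unfolding window_limit_def using U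
proof (rule ultrafilter_tendsto_Lim)
  have "cmod (window_average (\<lambda>i. g (y i)) n j) \<le> linf_norm y" for n j
    using order_trans[OF g norm_le_linf_norm[OF y]] by (rule norm_window_average_le)
  then show "bounded (range (\<lambda>k. window_average (\<lambda>i. g (y i)) (N k) (J k)))"
    by (intro boundedI) blast
qed

text \<open>Limits along a proper filter are unique, so any limit of the averages is the window limit.\<close>
lemma window_limit_eqI:
  assumes "ultrafilter U"
    and "((\<lambda>k. window_average (\<lambda>i. g (y i)) (N k) (J k)) \<longlongrightarrow> l) U"
  shows "window_limit U g N J y = l"
  unfolding window_limit_def using assms by (intro tendsto_Lim) (auto simp: ultrafilter_def)

text \<open>The window limit of a constant sequence is its value: for \<open>U\<close> finer than
  \<open>sequentially\<close>, eventually all windows are nonempty.\<close>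
lemma window_limit_const:
  assumes U: "ultrafilter U" "U \<le> sequentially" and N: "filterlim N at_top sequentially"
  shows "window_limit U g N J (\<lambda>n. v) = g v"
proof (rule window_limit_eqI[OF U(1)])
  have "\<forall>\<^sub>F k in sequentially. 1 \<le> N k"
    using N by (simp add: filterlim_at_top)
  then have "\<forall>\<^sub>F k in U. window_average (\<lambda>i. g v) (N k) (J k) = g v"
    by (rule filter_leD[OF U(2), THEN eventually_mono]) (simp add: window_average_const)
  then show "((\<lambda>k. window_average (\<lambda>i. g v) (N k) (J k)) \<longlongrightarrow> g v) U"
    by (rule tendsto_eventually)
qed

lemma window_limit_norm_le:
  fixes y :: "nat \<Rightarrow> 'a::real_normed_vector"
  assumes U: "ultrafilter U" and g: "\<And>z. cmod (g z) \<le> norm z" and y: "Bseq y"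
  shows "cmod (window_limit U g N J y) \<le> linf_norm y"
proof -
  have "cmod (window_average (\<lambda>i. g (y i)) n j) \<le> linf_norm y" for n j
    using order_trans[OF g norm_le_linf_norm[OF y]] by (rule norm_window_average_le)
  then have "\<forall>\<^sub>F k in U. cmod (window_average (\<lambda>i. g (y i)) (N k) (J k)) \<le> linf_norm y"
    by simp
  from tendsto_norm[OF window_limit_tendsto[OF U g y]] this show ?thesis
    by (rule tendsto_upperbound) (use U in \<open>simp add: ultrafilter_def\<close>)
qed

text \<open>Shift invariance: the averages of \<open>y\<close> and of its shift become asymptotically equal
  along \<open>sequentially\<close>, hence along the finer filter \<open>U\<close>.\<close>
lemma window_limit_shift:
  fixes y :: "nat \<Rightarrow> 'a::real_normed_vector"
  assumes U: "ultrafilter U" "U \<le> sequentially" and N: "filterlim N at_top sequentially"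
    and g: "\<And>z. cmod (g z) \<le> norm z" and y: "Bseq y"
  shows "window_limit U g N J (\<lambda>n. y (Suc n)) = window_limit U g N J y"
proof -
  obtain B where B: "\<And>n. norm (y n) \<le> B"
    using y by (meson BseqE)
  then have shifted: "Bseq (\<lambda>n. y (Suc n))"
    by (intro BseqI') auto
  have "(\<lambda>k. window_average (\<lambda>i. g (y (Suc i))) (N k) (J k)
           - window_average (\<lambda>i. g (y i)) (N k) (J k)) \<longlonglongrightarrow> 0"
    using order_trans[OF g B] N by (rule window_average_shift_vanishes)
  then have "((\<lambda>k. window_average (\<lambda>i. g (y (Suc i))) (N k) (J k)
           - window_average (\<lambda>i. g (y i)) (N k) (J k)) \<longlongrightarrow> 0) U"
    using U(2) by (rule tendsto_mono[rotated])
  moreover have "((\<lambda>k. window_average (\<lambda>i. g (y (Suc i))) (N k) (J k)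
           - window_average (\<lambda>i. g (y i)) (N k) (J k))
        \<longlongrightarrow> window_limit U g N J (\<lambda>n. y (Suc n)) - window_limit U g N J y) U"
    using window_limit_tendsto[OF U(1) g shifted] window_limit_tendsto[OF U(1) g y]
    by (rule tendsto_diff)
  moreover have "U \<noteq> bot"
    using U(1) by (simp add: ultrafilter_def)
  ultimately show ?thesis
    using tendsto_unique by fastforce
qed

lemma window_limit_banach_limit:
  fixes g :: "'a::complex_normed_vector \<Rightarrow> complex"
  assumes U: "ultrafilter U" "U \<le> sequentially" and N: "filterlim N at_top sequentially"
    and g: "complex_dual g" "\<And>z. cmod (g z) \<le> norm z"
  shows "banach_limit_functional (window_limit U g N J)"
  unfolding banach_limit_functional_def
proof (intro conjI allI impI)
  have g_add: "g (a + b) = g a + g b" and g_scale: "g (scaleC c a) = c * g a" for a b c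
    using g(1) by (auto simp: complex_dual_def)
  note conv = window_limit_tendsto[OF U(1) g(2)]
  show "window_limit U g N J (\<lambda>n. y n + z n) = window_limit U g N J y + window_limit U g N J z"
    if "Bseq y" "Bseq z" for y z :: "nat \<Rightarrow> 'a"
  proof (rule window_limit_eqI[OF U(1)])
    show "((\<lambda>k. window_average (\<lambda>i. g (y i + z i)) (N k) (J k))
            \<longlongrightarrow> window_limit U g N J y + window_limit U g N J z) U"
      unfolding g_add window_average_add using that by (intro tendsto_add conv)
  qed
  show "window_limit U g N J (\<lambda>n. scaleC c (y n)) = c * window_limit U g N J y"
    if "Bseq y" for c and y :: "nat \<Rightarrow> 'a"
  proof (rule window_limit_eqI[OF U(1)])
    show "((\<lambda>k. window_average (\<lambda>i. g (scaleC c (y i))) (N k) (J k))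
            \<longlongrightarrow> c * window_limit U g N J y) U"
      unfolding g_scale window_average_mult using that by (intro tendsto_mult_left conv)
  qed
  show "cmod (window_limit U g N J y) \<le> linf_norm y" if "Bseq y" for y :: "nat \<Rightarrow> 'a"
    using U(1) g(2) that by (rule window_limit_norm_le)
  show "window_limit U g N J (\<lambda>n. y (Suc n)) = window_limit U g N J y"
    if "Bseq y" for y :: "nat \<Rightarrow> 'a"
    using U N g(2) that by (rule window_limit_shift)
qed

subsection \<open>Bounded functionals\<close>

lemma complex_dual_bound:
  assumes "complex_dual f"
  shows "\<exists>K>0. \<forall>z. cmod (f z) \<le> K * norm z"
proof -
  obtain K where K: "\<And>z. cmod (f z) \<le> K * norm z"
    using assms by (auto simp: complex_dual_def)
  have "cmod (f z) \<le> max K 1 * norm z" for z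
    using K[of z] mult_right_mono[of K "max K 1" "norm z"] by simp
  then show ?thesis
    by (intro exI[of _ "max K 1"]) auto
qed

lemma complex_dual_mult:
  assumes "complex_dual f"
  shows "complex_dual (\<lambda>z. c * f z)"
proof -
  obtain K where "\<And>z. cmod (f z) \<le> K * norm z"
    using assms by (auto simp: complex_dual_def)
  then have "cmod (c * f z) \<le> (cmod c * K) * norm z" for z
    by (simp add: norm_mult mult.assoc mult_left_mono)
  with assms show ?thesis
    by (auto simp: complex_dual_def distrib_left mult.left_commute)
qed

lemma complex_dual_normalize:
  assumes "complex_dual f"
  shows "\<exists>c. c \<noteq> 0 \<and> complex_dual (\<lambda>z. c * f z) \<and> (\<forall>z. cmod (c * f z) \<le> norm z)"
proof -
  obtain K where K: "K > 0" "\<And>z. cmod (f z) \<le> K * norm z"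
    using complex_dual_bound[OF assms] by blast
  define c where "c = complex_of_real (inverse K)"
  have "cmod (c * f z) \<le> norm z" for z
  proof -
    have "cmod (c * f z) = inverse K * cmod (f z)"
      unfolding c_def norm_mult norm_of_real using K(1) by simp
    also have "\<dots> \<le> inverse K * (K * norm z)"
      using K by (intro mult_left_mono) auto
    also have "\<dots> = norm z"
      using K(1) by simp
    finally show ?thesis .
  qed
  moreover have "c \<noteq> 0"
    using K(1) by (simp add: c_def)
  moreover have "complex_dual (\<lambda>z. c * f z)"
    using assms by (rule complex_dual_mult)
  ultimately show ?thesis
    by blast
qed

lemma complex_dual_Bseq:
  assumes "complex_dual f" and "Bseq x"
  shows "Bseq (\<lambda>n. f (x n))"
proof -
  obtain K where K: "K > 0" "\<And>z. cmod (f z) \<le> K * norm z"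
    using complex_dual_bound[OF assms(1)] by blast
  obtain B where B: "\<And>n. norm (x n) \<le> B"
    using assms(2) by (meson BseqE)
  have "cmod (f (x n)) \<le> K * B" for n
    using order_trans[OF K(2) mult_left_mono[OF B]] K(1) by simp
  then show ?thesis
    by (rule BseqI')
qed

lemma not_almost_convergent_windows:
  fixes a :: "nat \<Rightarrow> complex"
  assumes "Bseq a" and "\<not> almost_convergent a l"
  shows "\<exists>\<epsilon>>0. \<exists>N J. filterlim N at_top sequentially \<and>
           (\<forall>k. \<epsilon> \<le> cmod (window_average a (N k) (J k) - l))"
proof -
  define T where "T n j = cmod (window_average a n j - l)" for n j
  obtain B where B: "\<And>i. norm (a i) \<le> B"
    using assms(1) by (meson BseqE)
  have "cmod (window_average a n j) \<le> B" for n j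
    using B by (rule norm_window_average_le)
  then have "T n j \<le> B + cmod l" for n j
    using norm_triangle_ineq4[of "window_average a n j" l] unfolding T_def
    by (meson add_right_mono order_trans)
  then have bdd: "bdd_above (range (T n))" for n
    by (rule bdd_aboveI2)
  have sup_nonneg: "0 \<le> (SUP j. T n j)" for n
    using cSUP_upper2[OF bdd[of n], of 0 0] by (simp add: T_def)
  have "\<not> (\<lambda>n. SUP j. T n j) \<longlonglongrightarrow> 0"
    using assms by (simp add: almost_convergent_def T_def window_average_def)
  then obtain \<epsilon> where \<epsilon>: "\<epsilon> > 0" and often: "\<And>k. \<exists>n\<ge>k. \<epsilon> \<le> (SUP j. T n j)"
    unfolding LIMSEQ_iff using sup_nonneg by (auto simp: not_less)
  have "\<exists>n j. n \<ge> k \<and> \<epsilon> / 2 < T n j" for k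
  proof -
    obtain n where n: "n \<ge> k" "\<epsilon> \<le> (SUP j. T n j)"
      using often by blast
    with \<epsilon> have "\<epsilon> / 2 < (SUP j. T n j)"
      by linarith
    then obtain j where "\<epsilon> / 2 < T n j"
      using less_cSUP_iff[OF _ bdd] by blast
    with n show ?thesis
      by blast
  qed
  then obtain N J where N_ge: "\<And>k. N k \<ge> k" and far: "\<And>k. \<epsilon> / 2 < T (N k) (J k)"
    by metis
  have "filterlim N at_top sequentially"
    using filterlim_ident by (rule filterlim_at_top_mono) (simp add: N_ge)
  moreover have "\<epsilon> / 2 > 0"
    using \<epsilon> by simp
  ultimately show ?thesis
    using far less_imp_le unfolding T_def by blast
qed

lemma banach_limit_separates:
  fixes x :: "nat \<Rightarrow> 'a::complex_normed_vector"
  assumes f: "complex_dual f" and x: "Bseq x"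
    and N: "filterlim N at_top sequentially" and \<epsilon>: "\<epsilon> > 0"
    and far: "\<And>k. \<epsilon> \<le> cmod (window_average (\<lambda>i. f (x i)) (N k) (J k) - f v)"
  shows "\<exists>L. banach_limit_functional L \<and> L x \<noteq> L (\<lambda>n. v)"
proof -
  obtain c where c: "c \<noteq> 0" "complex_dual (\<lambda>z. c * f z)" "\<And>z. cmod (c * f z) \<le> norm z"
    using complex_dual_normalize[OF f] by blast
  obtain U where U: "ultrafilter U" "U \<le> sequentially"
    using ex_ultrafilter_le[of sequentially] by auto
  define L where "L = window_limit U (\<lambda>z. c * f z) N J"
  have "cmod c * \<epsilon> \<le> cmod (window_average (\<lambda>i. c * f (x i)) (N k) (J k) - c * f v)" for k
    using mult_left_mono[OF far[of k] norm_ge_zero[of c]]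
    by (simp add: window_average_mult norm_mult flip: right_diff_distrib)
  then have "\<forall>\<^sub>F k in U. cmod c * \<epsilon>
               \<le> cmod (window_average (\<lambda>i. c * f (x i)) (N k) (J k) - c * f v)"
    by simp
  from tendsto_norm[OF tendsto_diff[OF window_limit_tendsto[OF U(1) c(3) x] tendsto_const]] this
  have "cmod c * \<epsilon> \<le> cmod (L x - c * f v)"
    unfolding L_def by (rule tendsto_lowerbound) (use U(1) in \<open>simp add: ultrafilter_def\<close>)
  moreover have "L (\<lambda>n. v) = c * f v"
    unfolding L_def using U N by (rule window_limit_const)
  moreover have "cmod c * \<epsilon> > 0"
    using c(1) \<epsilon> by simp
  ultimately have "L x \<noteq> L (\<lambda>n. v)"
    by auto
  moreover have "banach_limit_functional L"
    unfolding L_def using U N c(2,3) by (rule window_limit_banach_limit)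
  ultimately show ?thesis
    by blast
qed

theorem mainTheorem18:
  fixes x :: "nat \<Rightarrow> 'a::complex_normed_vector" and v :: 'a
  assumes "Bseq x"
    and "strongly_almost_convergent x v"
  shows "weakly_almost_convergent x v"
  unfolding weakly_almost_convergent_def
proof (intro conjI allI impI)
  show "Bseq x"
    by fact
  fix f :: "'a \<Rightarrow> complex"
  assume f: "complex_dual f"
  show "almost_convergent (\<lambda>n. f (x n)) (f v)"
  proof (rule ccontr)
    assume "\<not> almost_convergent (\<lambda>n. f (x n)) (f v)"
    then obtain \<epsilon> N J where "\<epsilon> > 0" "filterlim N at_top sequentially"
      "\<And>k. \<epsilon> \<le> cmod (window_average (\<lambda>i. f (x i)) (N k) (J k) - f v)"
      using not_almost_convergent_windows[OF complex_dual_Bseq[OF f assms(1)]] by blast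
    then obtain L where "banach_limit_functional L" "L x \<noteq> L (\<lambda>n. v)"
      using banach_limit_separates[OF f assms(1)] by blast
    with assms(2) show False
      unfolding strongly_almost_convergent_def by blast
  qed
qed
end
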